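(* In the iPALM setting described in the context, let $\varepsilon\in(0,1)$, $\beta_0,\rho_0>0$, $\sigma>1$, and choose $\beta_k=\beta_0\sigma^k$, $\rho_k=\rho_0\sigma^{-k}$, $\bar\varepsilon_k=\min\{\bar\varepsilon,\sqrt{\rho_0/(20\sigma)}\,\sigma^{-k}\}$ with $\bar\varepsilon=\frac{\varepsilon(\sigma-1)}{8(\sigma+1)}\min\{1,\sqrt{\beta_0\rho_0}\}$. Let $D_0=\sqrt{\beta_0\rho_0\|x^{(0)}-x^*\|^2+\|\lambda^{(0)}-\lambda^*\|^2}$, let $K\ge1$ be an integer, and set $B_x=\frac{2\bar\varepsilon(\sigma^K-1)}{\rho_0(\sigma-1)}+\frac{D_0}{\sqrt{\beta_0\rho_0}}$ and $B_\lambda=\frac{2\bar\varepsilon\sqrt{\beta_0}(\sigma^K-1)}{\sqrt{\rho_0}(\sigma-1)}+D_0$. Then $\|x^{(k)}-x^*\|\le B_x$ and $\|\lambda^{(k)}-\lambda^*\|\le B_\lambda$ for all $0\le k\le K$, and $\|x_*^{(k+1)}-x^*\|\le B_x$ for all $0\le k<K$, where $x_*^{(k+1)}=\arg\min_x\Psi_k(x)$.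
   Context: iPALM setting. Consider $\min_x G(x):=f(x)+r(x)$ subject to $A_Ex=b_E$, $A_Ix\le b_I$, where $f:\mathbb R^n\to\mathbb R$ is convex, differentiable with $L_f$-Lipschitz gradient and $\mu$-strongly convex ($\mu\ge0$), and $r$ is proper closed convex. Write $A=[A_E;A_I]$, $b=[b_E;b_I]$, and multipliers $\lambda=[\lambda_E;\lambda_I]$. Assume $(x^*,\lambda^* )$ satisfies the KKT conditions $0\in\partial G(x^* )+A^\top\lambda^*$, $A_Ex^*=b_E$, $A_Ix^*\le b_I$, $\lambda_I^*\ge0$, $\langle\lambda_I^*,A_Ix^*-b_I\rangle=0$. The augmented Lagrangian is $\mathcal L_\beta(x,\lambda)=G(x)+\langle\lambda_E,A_Ex-b_E\rangle+\frac\beta2\|A_Ex-b_E\|^2+\frac1{2\beta}\big(\|[\beta(A_Ix-b_I)+\lambda_I]_+\|^2-\|\lambda_I\|^2\big)$, with $[\cdot]_+$ the componentwise positive part. Given $x^{(0)}\in\mathrm{dom}(G)$, $\lambda^{(0)}$, and positive numbers $\beta_k,\rho_k$ and $\bar\varepsilon_k\ge0$, the iPALM iterates satisfy for each $k\ge0$: with $\Psi_k(x)=\mathcal L_{\beta_k}(x,\lambda^{(k)})+\frac{\rho_k}2\|x-x^{(k)}\|^2$, the point $x^{(k+1)}$ is any point with $\mathrm{dist}(0,\partial\Psi_k(x^{(k+1)}))\le\bar\varepsilon_k$, and $\lambda_E^{(k+1)}=\lambda_E^{(k)}+\beta_k(A_Ex^{(k+1)}-b_E)$, $\lambda_I^{(k+1)}=[\lambda_I^{(k)}+\beta_k(A_Ix^{(k+1)}-b_I)]_+$.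 $\partial$ is the convex subdifferential and $\mathrm{dist}(0,S)=\inf_{s\in S}\|s\|$. *)

theory Defs
  imports "HOL-Analysis.Analysis"
begin

definition proper_fn :: "('a \<Rightarrow> ereal) \<Rightarrow> bool" where
  "proper_fn r \<longleftrightarrow> (\<forall>x. r x \<noteq> -\<infinity>) \<and> (\<exists>x. r x \<noteq> \<infinity>)"

definition convex_fn :: "('a::real_vector \<Rightarrow> ereal) \<Rightarrow> bool" where
  "convex_fn r \<longleftrightarrow> (\<forall>x y t. 0 \<le> t \<and> t \<le> 1 \<longrightarrow>
      r ((1 - t) *\<^sub>R x + t *\<^sub>R y) \<le> ereal (1 - t) * r x + ereal t * r y)"

text \<open>closed = lower semicontinuous = closed epigraph\<close>
definition closed_fn :: "('a::topological_space \<Rightarrow> ereal) \<Rightarrow> bool" where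
  "closed_fn r \<longleftrightarrow> closed {p :: 'a \<times> real. r (fst p) \<le> ereal (snd p)}"

definition effdom :: "('a \<Rightarrow> ereal) \<Rightarrow> 'a set" where
  "effdom r = {x. r x < \<infinity>}"

text \<open>convex subdifferential (empty outside the effective domain)\<close>
definition subdiff :: "('a::real_inner \<Rightarrow> ereal) \<Rightarrow> 'a \<Rightarrow> 'a set" where
  "subdiff G x = {g. \<bar>G x\<bar> \<noteq> \<infinity> \<and> (\<forall>y. G x + ereal (g \<bullet> (y - x)) \<le> G y)}"

text \<open>dist(0,S) = inf of norms, with inf of the empty set = +infinity\<close>
definition dist0 :: "'a::real_normed_vector set \<Rightarrow> ereal" where
  "dist0 S = (INF s\<in>S. ereal (norm s))"

definition pospart :: "real ^ 'p \<Rightarrow> real ^ 'p" where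
  "pospart v = (\<chi> i. max 0 (v $ i))"

definition auglag ::
  "(real ^ 'n \<Rightarrow> ereal) \<Rightarrow> real ^ 'n ^ 'm \<Rightarrow> real ^ 'm \<Rightarrow> real ^ 'n ^ 'p \<Rightarrow> real ^ 'p
    \<Rightarrow> real \<Rightarrow> real ^ 'n \<Rightarrow> real ^ 'm \<Rightarrow> real ^ 'p \<Rightarrow> ereal" where
  "auglag GG Ae be Ai bi bt x le li =
     GG x + ereal (le \<bullet> (Ae *v x - be) + bt / 2 * (norm (Ae *v x - be))\<^sup>2
       + 1 / (2 * bt) * ((norm (pospart (bt *\<^sub>R (Ai *v x - bi) + li)))\<^sup>2 - (norm li)\<^sup>2))"

end

theory Submission
  imports Defs
begin

text \<open>
  Let \<open>\<lambda>'\<close> be the multipliers produced by an iPALM step from a point \<open>u\<close>. Testing the first-order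
  condition of the subproblem, for a subgradient \<open>g\<close> of \<open>\<Psi>\<^sub>k\<close> at \<open>u\<close>, against the direction
  \<open>x\<^sup>* - u\<close>, and adding the KKT subgradient inequality at \<open>x\<^sup>*\<close> and complementarity, gives
  \<open>\<langle>\<lambda>' - \<lambda>\<^sup>*, \<lambda>' - \<lambda>\<rangle> + \<beta>\<rho>\<langle>u - x, u - x\<^sup>*\<rangle> \<le> \<beta>\<langle>g, u - x\<^sup>*\<rangle>\<close>.
  Because \<open>\<beta>\<^sub>k\<rho>\<^sub>k = \<beta>\<^sub>0\<rho>\<^sub>0\<close> is constant, polarization turns this into growth of the weighted
  primal-dual distance \<open>(\<beta>\<^sub>0\<rho>\<^sub>0\<parallel>x - x\<^sup>*\<parallel>\<^sup>2 + \<parallel>\<lambda> - \<lambda>\<^sup>*\<parallel>\<^sup>2)\<^sup>1\<^sup>/\<^sup>2\<close> by at most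
  \<open>2\<beta>\<^sub>k\<epsilon>\<^sub>k/(\<beta>\<^sub>0\<rho>\<^sub>0)\<^sup>1\<^sup>/\<^sup>2\<close> per step; summing the geometric series gives the bounds,
  and the exact minimizer is the case \<open>g = 0\<close>.
\<close>

lemma max0_add_square_le:
  fixes a e :: real
  shows "(max 0 (a + e))\<^sup>2 \<le> (max 0 a)\<^sup>2 + 2 * max 0 a * e + e\<^sup>2"
proof (cases "a \<ge> 0"; cases "a + e \<ge> 0")
  assume "\<not> a \<ge> 0" "a + e \<ge> 0"
  then show ?thesis by (simp add: max_def power2_eq_square) (smt (verit) mult_mono)
qed (use zero_le_square[of "a + e"] in \<open>auto simp: max_def power2_eq_square algebra_simps\<close>)

lemma norm_square_vec_eq_sum: "(norm (v :: real ^ 'p))\<^sup>2 = (\<Sum>i\<in>UNIV. (v $ i)\<^sup>2)"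
  unfolding power2_norm_eq_inner inner_vec_def by (simp add: power2_eq_square)

lemma norm_pospart_add_square_le:
  "(norm (pospart (v + w)))\<^sup>2 \<le> (norm (pospart v))\<^sup>2 + 2 * (pospart v \<bullet> w) + (norm (w :: real ^ 'p))\<^sup>2"
proof -
  have "(norm (pospart (v + w)))\<^sup>2 = (\<Sum>i\<in>UNIV. (max 0 (v $ i + w $ i))\<^sup>2)"
    by (simp add: norm_square_vec_eq_sum pospart_def)
  also have "\<dots> \<le> (\<Sum>i\<in>UNIV. (max 0 (v $ i))\<^sup>2 + 2 * max 0 (v $ i) * w $ i + (w $ i)\<^sup>2)"
    by (rule sum_mono) (rule max0_add_square_le)
  also have "\<dots> = (norm (pospart v))\<^sup>2 + 2 * (pospart v \<bullet> w) + (norm w)\<^sup>2"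
    by (simp add: norm_square_vec_eq_sum pospart_def inner_vec_def sum.distrib sum_distrib_left
        mult.assoc)
  finally show ?thesis .
qed

lemma max0_update_complementarity_le:
  fixes bt l a xa b ls :: real
  assumes "bt > 0" "xa \<le> b" "ls \<ge> 0" "ls * (xa - b) = 0"
  shows "bt * ((max 0 (l + bt * (a - b)) - ls) * (xa - a))
           + (max 0 (l + bt * (a - b)) - ls) * (max 0 (l + bt * (a - b)) - l) \<le> 0"
proof -
  define w where "w = l + bt * (a - b)"
  define p where "p = max 0 w"
  have xa: "xa - a = (xa - b) - (w - l) / bt"
    using assms(1) by (simp add: w_def field_simps)
  have "bt * ((p - ls) * (xa - a)) + (p - ls) * (p - l)
      = bt * p * (xa - b) - bt * (ls * (xa - b)) + p * (p - w) - ls * (p - w)"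
    unfolding xa using assms(1) by (simp add: field_simps)
  moreover have "bt * p * (xa - b) \<le> 0"
    using assms by (intro mult_nonneg_nonpos) (auto simp: p_def)
  moreover have "p * (p - w) = 0" "ls * (p - w) \<ge> 0" "bt * (ls * (xa - b)) = 0"
    using assms by (auto simp: p_def max_def)
  ultimately show ?thesis
    unfolding w_def[symmetric] p_def[symmetric] by linarith
qed

lemma complementarity_componentwise:
  fixes l s :: "real ^ 'p"
  assumes "\<And>i. l $ i \<ge> 0" "\<And>i. s $ i \<le> 0" "l \<bullet> s = 0"
  shows "l $ i * s $ i = 0"
proof -
  have "\<forall>j\<in>UNIV. - (l $ j * s $ j) = 0"
    using assms by (subst sum_nonneg_eq_0_iff[symmetric])
      (auto simp: inner_vec_def sum_negf mult_nonneg_nonpos)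
  then show ?thesis by simp
qed

lemma pospart_update_complementarity_le:
  fixes Ai :: "real ^ 'n ^ 'p" and lI :: "real ^ 'p" and u :: "real ^ 'n"
  assumes bt: "bt > 0" and feas: "\<And>i. (Ai *v xs) $ i \<le> bI $ i" and nonneg: "\<And>i. lIs $ i \<ge> 0"
    and compl: "lIs \<bullet> (Ai *v xs - bI) = 0"
  defines "lI' \<equiv> pospart (lI + bt *\<^sub>R (Ai *v u - bI))"
  shows "bt * ((lI' - lIs) \<bullet> (Ai *v xs - Ai *v u)) + (lI' - lIs) \<bullet> (lI' - lI) \<le> 0"
proof -
  have compl_i: "lIs $ i * ((Ai *v xs) $ i - bI $ i) = 0" for i
    using complementarity_componentwise[of lIs "Ai *v xs - bI"] nonneg feas compl by simp
  have "bt * ((lI' - lIs) \<bullet> (Ai *v xs - Ai *v u)) + (lI' - lIs) \<bullet> (lI' - lI)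
     = (\<Sum>i\<in>UNIV. bt * ((max 0 (lI $ i + bt * ((Ai *v u) $ i - bI $ i)) - lIs $ i)
                          * ((Ai *v xs) $ i - (Ai *v u) $ i))
         + (max 0 (lI $ i + bt * ((Ai *v u) $ i - bI $ i)) - lIs $ i)
           * (max 0 (lI $ i + bt * ((Ai *v u) $ i - bI $ i)) - lI $ i))"
    by (simp add: lI'_def inner_vec_def pospart_def sum_distrib_left sum.distrib)
  also have "\<dots> \<le> 0"
    by (rule sum_nonpos) (rule max0_update_complementarity_le[OF bt], use feas nonneg compl_i in auto)
  finally show ?thesis .
qed

definition auglag_smooth_part ::
  "real ^ 'n ^ 'm \<Rightarrow> real ^ 'm \<Rightarrow> real ^ 'n ^ 'p \<Rightarrow> real ^ 'p \<Rightarrow> real \<Rightarrow> real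
    \<Rightarrow> real ^ 'n \<Rightarrow> real ^ 'm \<Rightarrow> real ^ 'p \<Rightarrow> real ^ 'n \<Rightarrow> real" where
  "auglag_smooth_part Ae bE Ai bI bt rh x lE lI y =
     lE \<bullet> (Ae *v y - bE) + bt / 2 * (norm (Ae *v y - bE))\<^sup>2
       + 1 / (2 * bt) * ((norm (pospart (bt *\<^sub>R (Ai *v y - bI) + lI)))\<^sup>2 - (norm lI)\<^sup>2)
       + rh / 2 * (norm (y - x))\<^sup>2"

lemma auglag_prox_eq:
  "auglag G Ae bE Ai bI bt y lE lI + ereal (rh / 2 * (norm (y - x))\<^sup>2)
     = G y + ereal (auglag_smooth_part Ae bE Ai bI bt rh x lE lI y)"
  unfolding auglag_def auglag_smooth_part_def by (simp add: add.assoc)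

lemma norm_add_square: "(norm (a + b :: 'a::real_inner))\<^sup>2 = (norm a)\<^sup>2 + 2 * (a \<bullet> b) + (norm b)\<^sup>2"
  by (simp add: power2_norm_eq_inner inner_add inner_commute)

lemma auglag_smooth_part_segment_le:
  assumes bt: "bt > 0"
  shows "auglag_smooth_part Ae bE Ai bI bt rh x lE lI (u + t *\<^sub>R d)
    \<le> auglag_smooth_part Ae bE Ai bI bt rh x lE lI u
      + t * ((lE + bt *\<^sub>R (Ae *v u - bE)) \<bullet> (Ae *v d)
             + pospart (lI + bt *\<^sub>R (Ai *v u - bI)) \<bullet> (Ai *v d) + rh * ((u - x) \<bullet> d))
      + t\<^sup>2 * (bt / 2 * (norm (Ae *v d))\<^sup>2 + bt / 2 * (norm (Ai *v d))\<^sup>2 + rh / 2 * (norm d)\<^sup>2)"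
proof -
  define w where "w = bt *\<^sub>R (Ai *v u - bI) + lI"
  have eqE: "Ae *v (u + t *\<^sub>R d) - bE = (Ae *v u - bE) + t *\<^sub>R (Ae *v d)"
    by (simp add: algebra_simps)
  have eqI: "bt *\<^sub>R (Ai *v (u + t *\<^sub>R d) - bI) + lI = w + (t * bt) *\<^sub>R (Ai *v d)"
    by (simp add: w_def algebra_simps)
  have eqx: "u + t *\<^sub>R d - x = (u - x) + t *\<^sub>R d"
    by (simp add: algebra_simps)
  have "1 / (2 * bt) * (norm (pospart (w + (t * bt) *\<^sub>R (Ai *v d))))\<^sup>2
      \<le> 1 / (2 * bt) * ((norm (pospart w))\<^sup>2 + 2 * (t * bt) * (pospart w \<bullet> (Ai *v d))
                         + (t * bt)\<^sup>2 * (norm (Ai *v d))\<^sup>2)"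
    using norm_pospart_add_square_le[of w "(t * bt) *\<^sub>R (Ai *v d)"] bt
    by (intro mult_left_mono) (auto simp: power_mult_distrib)
  also have "\<dots> = 1 / (2 * bt) * (norm (pospart w))\<^sup>2 + t * (pospart w \<bullet> (Ai *v d))
                  + t\<^sup>2 * (bt / 2 * (norm (Ai *v d))\<^sup>2)"
    using bt by (simp add: field_simps power2_eq_square)
  finally have "1 / (2 * bt) * (norm (pospart (w + (t * bt) *\<^sub>R (Ai *v d))))\<^sup>2
      \<le> 1 / (2 * bt) * (norm (pospart w))\<^sup>2 + t * (pospart w \<bullet> (Ai *v d))
          + t\<^sup>2 * (bt / 2 * (norm (Ai *v d))\<^sup>2)" .
  moreover have "pospart (lI + bt *\<^sub>R (Ai *v u - bI)) = pospart w"
    by (simp add: w_def add.commute)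
  ultimately show ?thesis
    unfolding auglag_smooth_part_def eqE eqI eqx norm_add_square w_def[symmetric]
    by (simp add: inner_add inner_diff inner_scaleR_left inner_scaleR_right power2_eq_square
        algebra_simps)
qed

lemma le_of_le_add_scaled_small:
  fixes a b C :: real
  assumes "\<And>t. 0 < t \<Longrightarrow> t \<le> 1 \<Longrightarrow> a \<le> b + t * C"
  shows "a \<le> b"
proof (rule ccontr)
  assume "\<not> a \<le> b"
  then have ab: "a > b" by simp
  show False
  proof (cases "C \<le> 0")
    case True
    then show ?thesis using assms[of 1] ab by simp
  next
    case False
    define t where "t = min 1 ((a - b) / (2 * C))"
    have t: "0 < t" "t \<le> 1" using False ab by (auto simp: t_def)
    have "t * C \<le> (a - b) / (2 * C) * C"
      using False by (intro mult_right_mono) (auto simp: t_def)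
    also have "\<dots> = (a - b) / 2" using False by simp
    finally show ?thesis using assms[OF t] ab by simp
  qed
qed

lemma dist0_le_bound:
  assumes "dist0 S \<le> ereal e" "a \<ge> 0" "\<And>s. s \<in> S \<Longrightarrow> P \<le> D + a * norm s"
  shows "P \<le> D + a * e"
proof (rule field_le_epsilon)
  fix \<delta> :: real
  assume \<delta>: "\<delta> > 0"
  have "dist0 S < ereal (e + \<delta> / (a + 1))"
    using assms(1,2) \<delta> by (auto intro: le_less_trans)
  then obtain s where s: "s \<in> S" "norm s < e + \<delta> / (a + 1)"
    unfolding dist0_def INF_less_iff by auto
  have "P \<le> D + a * (e + \<delta> / (a + 1))"
    using assms(3)[OF s(1)] mult_left_mono[OF less_imp_le[OF s(2)] assms(2)] by linarith
  also have "\<dots> \<le> D + a * e + \<delta>"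
    using assms(2) \<delta> by (simp add: field_simps)
  finally show "P \<le> D + a * e + \<delta>" .
qed

lemma polarization_inner:
  "2 * ((p - q) \<bullet> (p - r)) = (norm (p - q))\<^sup>2 + (norm (p - r))\<^sup>2 - (norm (r - q :: 'a::real_inner))\<^sup>2"
  by (simp add: power2_norm_eq_inner inner_diff_left inner_diff_right inner_commute algebra_simps)

lemma le_of_square_le_square_add_mult:
  fixes P D a :: real
  assumes "P \<ge> 0" "D \<ge> 0" "a \<ge> 0" "P\<^sup>2 \<le> D\<^sup>2 + a * P"
  shows "P \<le> D + a"
proof (rule ccontr)
  assume "\<not> P \<le> D + a"
  then have "P * P > P * (D + a)" "P * D \<ge> D * D"
    using assms by (auto intro: mult_strict_left_mono mult_right_mono)
  then show False using assms(4) by (simp add: power2_eq_square algebra_simps)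
qed

lemma weighted_dist_step_le:
  fixes u x xs g :: "'a::real_inner" and lE lE' lEs :: "'b::real_inner" and lI lI' lIs :: "'c::real_inner"
  assumes H: "(lE' - lEs) \<bullet> (lE' - lE) + (lI' - lIs) \<bullet> (lI' - lI) + c * ((u - x) \<bullet> (u - xs))
                \<le> bt * (g \<bullet> (u - xs))"
    and c: "c > 0" and bt: "bt > 0"
  shows "sqrt (c * (norm (u - xs))\<^sup>2 + (norm (lE' - lEs))\<^sup>2 + (norm (lI' - lIs))\<^sup>2)
     \<le> sqrt (c * (norm (x - xs))\<^sup>2 + (norm (lE - lEs))\<^sup>2 + (norm (lI - lIs))\<^sup>2) + 2 * bt / sqrt c * norm g"
proof -
  define P where "P = sqrt (c * (norm (u - xs))\<^sup>2 + (norm (lE' - lEs))\<^sup>2 + (norm (lI' - lIs))\<^sup>2)"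
  define D where "D = sqrt (c * (norm (x - xs))\<^sup>2 + (norm (lE - lEs))\<^sup>2 + (norm (lI - lIs))\<^sup>2)"
  define a where "a = 2 * bt / sqrt c * norm g"
  have P2: "P\<^sup>2 = c * (norm (u - xs))\<^sup>2 + (norm (lE' - lEs))\<^sup>2 + (norm (lI' - lIs))\<^sup>2"
    unfolding P_def using c by (intro real_sqrt_pow2) auto
  have D2: "D\<^sup>2 = c * (norm (x - xs))\<^sup>2 + (norm (lE - lEs))\<^sup>2 + (norm (lI - lIs))\<^sup>2"
    unfolding D_def using c by (intro real_sqrt_pow2) auto
  have pE: "2 * ((lE' - lEs) \<bullet> (lE' - lE)) \<ge> (norm (lE' - lEs))\<^sup>2 - (norm (lE - lEs))\<^sup>2"
    using polarization_inner[of lE' lEs lE] by simp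
  have pI: "2 * ((lI' - lIs) \<bullet> (lI' - lI)) \<ge> (norm (lI' - lIs))\<^sup>2 - (norm (lI - lIs))\<^sup>2"
    using polarization_inner[of lI' lIs lI] by simp
  have "2 * ((u - xs) \<bullet> (u - x)) \<ge> (norm (u - xs))\<^sup>2 - (norm (x - xs))\<^sup>2"
    using polarization_inner[of u xs x] by simp
  from mult_left_mono[OF this, of c]
  have pu: "2 * c * ((u - x) \<bullet> (u - xs)) \<ge> c * (norm (u - xs))\<^sup>2 - c * (norm (x - xs))\<^sup>2"
    using c by (simp add: inner_commute algebra_simps)
  have "g \<bullet> (u - xs) \<le> norm g * norm (u - xs)"
    by (rule norm_cauchy_schwarz)
  then have "bt * (g \<bullet> (u - xs)) \<le> bt * (norm g * norm (u - xs))"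
    using bt by simp
  then have "P\<^sup>2 \<le> D\<^sup>2 + a * (sqrt c * norm (u - xs))"
    unfolding P2 D2 a_def using H pE pI pu c by (simp add: algebra_simps)
  also have "sqrt c * norm (u - xs) \<le> P"
  proof -
    have "sqrt c * norm (u - xs) = sqrt (c * (norm (u - xs))\<^sup>2)"
      using c by (simp add: real_sqrt_mult)
    also have "\<dots> \<le> P"
      unfolding P_def by (rule real_sqrt_le_mono) simp
    finally show ?thesis .
  qed
  then have "a * (sqrt c * norm (u - xs)) \<le> a * P"
    using bt c by (intro mult_left_mono) (auto simp: a_def)
  finally have "P\<^sup>2 \<le> D\<^sup>2 + a * P"
    by simp
  moreover have "P \<ge> 0" "D \<ge> 0" "a \<ge> 0"
    using bt c by (auto simp: P_def D_def a_def)
  ultimately show ?thesis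
    unfolding P_def[symmetric] D_def[symmetric] a_def[symmetric]
    using le_of_square_le_square_add_mult by blast
qed

lemma convex_on_norm_square: "convex_on UNIV (\<lambda>y::'a::real_inner. (norm y)\<^sup>2)"
proof (rule convex_onI)
  fix t :: real and x y :: 'a
  assume "0 < t" "t < 1"
  moreover have "(norm ((1 - t) *\<^sub>R x + t *\<^sub>R y))\<^sup>2
      = (1 - t) * (norm x)\<^sup>2 + t * (norm y)\<^sup>2 - t * (1 - t) * (norm (x - y))\<^sup>2"
    by (simp add: power2_norm_eq_inner inner_add_left inner_add_right inner_diff_left
        inner_diff_right inner_commute algebra_simps)
  ultimately show "(norm ((1 - t) *\<^sub>R x + t *\<^sub>R y))\<^sup>2 \<le> (1 - t) * (norm x)\<^sup>2 + t * (norm y)\<^sup>2"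
    by simp
qed simp

lemma convex_on_of_strongly_convex:
  fixes f :: "'a::real_inner \<Rightarrow> real"
  assumes "\<mu> \<ge> 0" "convex_on UNIV (\<lambda>y. f y - \<mu> / 2 * (norm y)\<^sup>2)"
  shows "convex_on UNIV f"
proof -
  have "convex_on UNIV (\<lambda>y. (f y - \<mu> / 2 * (norm y)\<^sup>2) + \<mu> / 2 * (norm y)\<^sup>2)"
    using assms by (intro convex_on_add convex_on_cmul convex_on_norm_square) auto
  then show ?thesis by simp
qed

locale ipalm_kkt =
  fixes f :: "real ^ 'n \<Rightarrow> real" and r :: "real ^ 'n \<Rightarrow> ereal" and G :: "real ^ 'n \<Rightarrow> ereal"
    and Ae :: "real ^ 'n ^ 'm" and bE :: "real ^ 'm"
    and Ai :: "real ^ 'n ^ 'p" and bI :: "real ^ 'p"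
    and xs :: "real ^ 'n" and lEs :: "real ^ 'm" and lIs :: "real ^ 'p"
  assumes f_convex: "convex_on UNIV f" and r_convex: "convex_fn r" and r_not_minf: "\<And>y. r y \<noteq> -\<infinity>"
    and G_def: "G = (\<lambda>y. ereal (f y) + r y)"
    and kkt_sub: "- (transpose Ae *v lEs + transpose Ai *v lIs) \<in> subdiff G xs"
    and kkt_eq: "Ae *v xs = bE"
    and kkt_ineq: "\<And>i. (Ai *v xs) $ i \<le> bI $ i"
    and kkt_mult: "\<And>i. lIs $ i \<ge> 0"
    and kkt_compl: "lIs \<bullet> (Ai *v xs - bI) = 0"
begin

abbreviation prox_auglag :: "real \<Rightarrow> real \<Rightarrow> real ^ 'n \<Rightarrow> real ^ 'm \<Rightarrow> real ^ 'p \<Rightarrow> real ^ 'n \<Rightarrow> ereal"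
  where "prox_auglag bt rh x lE lI y
           \<equiv> auglag G Ae bE Ai bI bt y lE lI + ereal (rh / 2 * (norm (y - x))\<^sup>2)"

definition pd_dist :: "real \<Rightarrow> real ^ 'n \<Rightarrow> real ^ 'm \<Rightarrow> real ^ 'p \<Rightarrow> real" where
  "pd_dist c x lE lI = sqrt (c * (norm (x - xs))\<^sup>2 + (norm (lE - lEs))\<^sup>2 + (norm (lI - lIs))\<^sup>2)"

lemma r_finite_of_subdiff_prox_auglag:
  assumes "g \<in> subdiff (prox_auglag bt rh x lE lI) u"
  obtains ru where "r u = ereal ru"
  using assms r_not_minf[of u] unfolding subdiff_def auglag_prox_eq G_def by (cases "r u") auto

lemma prox_auglag_first_order:
  assumes bt: "bt > 0" and g: "g \<in> subdiff (prox_auglag bt rh x lE lI) u"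
    and ru: "r u = ereal ru" and ry: "r y = ereal ry"
  shows "g \<bullet> (y - u) \<le> f y + ry - (f u + ru)
           + ((lE + bt *\<^sub>R (Ae *v u - bE)) \<bullet> (Ae *v (y - u))
              + pospart (lI + bt *\<^sub>R (Ai *v u - bI)) \<bullet> (Ai *v (y - u)) + rh * ((u - x) \<bullet> (y - u)))"
    (is "_ \<le> _ + ?L")
proof (rule le_of_le_add_scaled_small)
  define S where "S = auglag_smooth_part Ae bE Ai bI bt rh x lE lI"
  fix t :: real
  assume t: "0 < t" "t \<le> 1"
  define yt where "yt = (1 - t) *\<^sub>R u + t *\<^sub>R y"
  have yt_eq: "yt = u + t *\<^sub>R (y - u)"
    by (simp add: yt_def algebra_simps)
  have "G u + ereal (S u) + ereal (g \<bullet> (yt - u)) \<le> G yt + ereal (S yt)"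
    using g unfolding subdiff_def auglag_prox_eq S_def by auto
  also have "\<dots> \<le> ereal (f yt) + ereal ((1 - t) * ru + t * ry) + ereal (S yt)"
  proof -
    have "r yt \<le> ereal (1 - t) * r u + ereal t * r y"
      using r_convex t unfolding convex_fn_def yt_def by auto
    then show ?thesis
      unfolding G_def by (intro add_right_mono add_left_mono) (simp add: ru ry)
  qed
  finally have "f u + ru + S u + t * (g \<bullet> (y - u)) \<le> f yt + ((1 - t) * ru + t * ry) + S yt"
    by (simp add: G_def ru yt_eq)
  moreover have "f yt \<le> (1 - t) * f u + t * f y"
    unfolding yt_def using t by (intro convex_onD[OF f_convex]) auto
  moreover have "S yt \<le> S u + t * ?L
      + t\<^sup>2 * (bt / 2 * (norm (Ae *v (y - u)))\<^sup>2 + bt / 2 * (norm (Ai *v (y - u)))\<^sup>2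
              + rh / 2 * (norm (y - u))\<^sup>2)"
    unfolding S_def yt_eq by (rule auglag_smooth_part_segment_le[OF bt])
  ultimately have "t * (g \<bullet> (y - u)) \<le> t * (f y + ry - (f u + ru) + ?L + t *
      (bt / 2 * (norm (Ae *v (y - u)))\<^sup>2 + bt / 2 * (norm (Ai *v (y - u)))\<^sup>2 + rh / 2 * (norm (y - u))\<^sup>2))"
    by (simp add: algebra_simps power2_eq_square)
  then show "g \<bullet> (y - u) \<le> f y + ry - (f u + ru) + ?L + t *
      (bt / 2 * (norm (Ae *v (y - u)))\<^sup>2 + bt / 2 * (norm (Ai *v (y - u)))\<^sup>2 + rh / 2 * (norm (y - u))\<^sup>2)"
    using t(1) by (rule mult_left_le_imp_le)
qed

lemma prox_auglag_subgrad_ineq: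
  fixes bt rh :: real and x u g :: "real ^ 'n" and lE :: "real ^ 'm" and lI :: "real ^ 'p"
  assumes bt: "bt > 0" and g: "g \<in> subdiff (prox_auglag bt rh x lE lI) u"
  defines "lE' \<equiv> lE + bt *\<^sub>R (Ae *v u - bE)" and "lI' \<equiv> pospart (lI + bt *\<^sub>R (Ai *v u - bI))"
  shows "(lE' - lEs) \<bullet> (lE' - lE) + (lI' - lIs) \<bullet> (lI' - lI) + bt * rh * ((u - x) \<bullet> (u - xs))
           \<le> bt * (g \<bullet> (u - xs))"
proof -
  obtain ru where ru: "r u = ereal ru"
    using g by (rule r_finite_of_subdiff_prox_auglag)
  have kkt: "\<bar>G xs\<bar> \<noteq> \<infinity>"
      "G xs + ereal (- (transpose Ae *v lEs + transpose Ai *v lIs) \<bullet> (u - xs)) \<le> G u"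
    using kkt_sub unfolding subdiff_def by auto
  obtain rxs where rxs: "r xs = ereal rxs"
    using kkt(1) r_not_minf[of xs] unfolding G_def by (cases "r xs") auto
  have "- (transpose Ae *v lEs + transpose Ai *v lIs) \<bullet> (u - xs)
          = (transpose Ae *v lEs + transpose Ai *v lIs) \<bullet> (xs - u)"
  proof -
    have "xs - u = - (u - xs)"
      by simp
    then show ?thesis
      by (simp only: inner_minus_left inner_minus_right)
  qed
  also have "\<dots> = lEs \<bullet> (Ae *v (xs - u)) + lIs \<bullet> (Ai *v (xs - u))"
    by (simp only: inner_add_left transpose_matrix_vector dot_lmul_matrix)
  finally have "f xs + rxs - (f u + ru) \<le> - (lEs \<bullet> (Ae *v (xs - u)) + lIs \<bullet> (Ai *v (xs - u)))"
    using kkt(2) unfolding G_def ru rxs by simp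
  then have "g \<bullet> (xs - u) \<le> (lE' - lEs) \<bullet> (Ae *v (xs - u)) + (lI' - lIs) \<bullet> (Ai *v (xs - u))
                           + rh * ((u - x) \<bullet> (xs - u))"
    using prox_auglag_first_order[OF bt g ru rxs] unfolding lE'_def lI'_def inner_diff_left
    by linarith
  from mult_left_mono[OF this, of bt] bt
  have descent: "bt * (g \<bullet> (xs - u)) \<le> bt * ((lE' - lEs) \<bullet> (Ae *v (xs - u)))
      + bt * ((lI' - lIs) \<bullet> (Ai *v xs - Ai *v u)) + bt * (rh * ((u - x) \<bullet> (xs - u)))"
    by (simp add: distrib_left matrix_vector_mult_diff_distrib)
  have "lE' - lE = (- bt) *\<^sub>R (Ae *v (xs - u))"
    by (simp add: lE'_def kkt_eq matrix_vector_mult_diff_distrib algebra_simps)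
  then have multE: "(lE' - lEs) \<bullet> (lE' - lE) = - (bt * ((lE' - lEs) \<bullet> (Ae *v (xs - u))))"
    by simp
  have multI: "bt * ((lI' - lIs) \<bullet> (Ai *v xs - Ai *v u)) + (lI' - lIs) \<bullet> (lI' - lI) \<le> 0"
    unfolding lI'_def using bt kkt_ineq kkt_mult kkt_compl by (rule pospart_update_complementarity_le)
  have "bt * rh * ((u - x) \<bullet> (u - xs)) = - (bt * (rh * ((u - x) \<bullet> (xs - u))))"
    "bt * (g \<bullet> (u - xs)) = - (bt * (g \<bullet> (xs - u)))"
    by (simp_all add: inner_diff_right algebra_simps)
  with descent multE multI show ?thesis
    by linarith
qed

lemma pd_dist_prox_step_le:
  assumes bt: "bt > 0" and rh: "rh > 0" and g: "g \<in> subdiff (prox_auglag bt rh x lE lI) u"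
  shows "pd_dist (bt * rh) u (lE + bt *\<^sub>R (Ae *v u - bE)) (pospart (lI + bt *\<^sub>R (Ai *v u - bI)))
           \<le> pd_dist (bt * rh) x lE lI + 2 * bt / sqrt (bt * rh) * norm g"
  unfolding pd_dist_def using bt rh
  by (intro weighted_dist_step_le prox_auglag_subgrad_ineq[OF bt g]) auto

lemma pd_dist_inexact_prox_step_le:
  assumes bt: "bt > 0" and rh: "rh > 0"
    and e: "dist0 (subdiff (prox_auglag bt rh x lE lI) u) \<le> ereal e"
  shows "pd_dist (bt * rh) u (lE + bt *\<^sub>R (Ae *v u - bE)) (pospart (lI + bt *\<^sub>R (Ai *v u - bI)))
           \<le> pd_dist (bt * rh) x lE lI + 2 * bt / sqrt (bt * rh) * e"
proof (rule dist0_le_bound[OF e])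
  show "2 * bt / sqrt (bt * rh) \<ge> 0"
    using bt rh by simp
qed (rule pd_dist_prox_step_le[OF bt rh])

lemma pd_dist_exact_prox_step_le:
  assumes bt: "bt > 0" and rh: "rh > 0" and w: "w \<in> effdom G"
    and z: "\<forall>y. prox_auglag bt rh x lE lI z \<le> prox_auglag bt rh x lE lI y"
  shows "pd_dist (bt * rh) z (lE + bt *\<^sub>R (Ae *v z - bE)) (pospart (lI + bt *\<^sub>R (Ai *v z - bI)))
           \<le> pd_dist (bt * rh) x lE lI"
proof -
  have "prox_auglag bt rh x lE lI z < \<infinity>"
    using z[rule_format, of w] w unfolding effdom_def auglag_prox_eq by (auto intro: le_less_trans)
  moreover have "prox_auglag bt rh x lE lI z \<noteq> -\<infinity>"
    using r_not_minf[of z] unfolding auglag_prox_eq G_def by (cases "r z") auto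
  ultimately have "0 \<in> subdiff (prox_auglag bt rh x lE lI) z"
    using z unfolding subdiff_def by auto
  from pd_dist_prox_step_le[OF bt rh this] show ?thesis by simp
qed

lemma pd_dist_iterates_le:
  fixes x :: "nat \<Rightarrow> real ^ 'n" and lE :: "nat \<Rightarrow> real ^ 'm" and lI :: "nat \<Rightarrow> real ^ 'p"
  assumes pos: "\<And>k. \<beta> k > 0" "\<And>k. \<rho> k > 0" and prod: "\<And>k. \<beta> k * \<rho> k = c"
    and x_step: "\<And>k. dist0 (subdiff (prox_auglag (\<beta> k) (\<rho> k) (x k) (lE k) (lI k)) (x (Suc k)))
                         \<le> ereal (epsk k)"
    and lE_step: "\<And>k. lE (Suc k) = lE k + \<beta> k *\<^sub>R (Ae *v x (Suc k) - bE)"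
    and lI_step: "\<And>k. lI (Suc k) = pospart (lI k + \<beta> k *\<^sub>R (Ai *v x (Suc k) - bI))"
    and growth: "\<And>k. 2 * \<beta> k / sqrt c * epsk k \<le> \<delta> k"
  shows "pd_dist c (x k) (lE k) (lI k) \<le> pd_dist c (x 0) (lE 0) (lI 0) + (\<Sum>j<k. \<delta> j)"
proof (induction k)
  case (Suc k)
  have "pd_dist c (x (Suc k)) (lE (Suc k)) (lI (Suc k))
          \<le> pd_dist c (x k) (lE k) (lI k) + 2 * \<beta> k / sqrt c * epsk k"
    using pd_dist_inexact_prox_step_le[OF pos(1,2) x_step] by (simp add: prod lE_step lI_step)
  with Suc.IH growth[of k] show ?case by simp
qed simp

lemma norm_le_of_pd_dist_le:
  assumes "c > 0" "pd_dist c x lE lI \<le> B"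
  shows "norm (x - xs) \<le> B / sqrt c"
proof -
  have "sqrt c * norm (x - xs) = sqrt (c * (norm (x - xs))\<^sup>2)"
    using assms(1) by (simp add: real_sqrt_mult)
  also have "\<dots> \<le> pd_dist c x lE lI"
    unfolding pd_dist_def by (intro real_sqrt_le_mono) simp
  finally show ?thesis
    using assms by (simp add: pos_le_divide_eq mult.commute)
qed

lemma multiplier_dist_le_pd_dist:
  "c \<ge> 0 \<Longrightarrow> sqrt ((norm (lE - lEs))\<^sup>2 + (norm (lI - lIs))\<^sup>2) \<le> pd_dist c x lE lI"
  unfolding pd_dist_def by (intro real_sqrt_le_mono) simp

end

lemma weighted_increment_le:
  fixes \<beta>0 \<rho>0 s e eb :: real
  assumes "\<beta>0 > 0" "\<rho>0 > 0" "s \<ge> 0" "e \<le> eb"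
  shows "2 * (\<beta>0 * s) / sqrt (\<beta>0 * \<rho>0) * e \<le> 2 * eb * sqrt \<beta>0 / sqrt \<rho>0 * s"
proof -
  define a b where "a = sqrt \<beta>0" and "b = sqrt \<rho>0"
  have ab: "a > 0" "b > 0" "\<beta>0 = a\<^sup>2" "sqrt (\<beta>0 * \<rho>0) = a * b"
    using assms by (auto simp: a_def b_def real_sqrt_mult)
  have "2 * (a\<^sup>2 * s) / (a * b) * e = 2 * a / b * s * e"
    using ab by (simp add: field_simps power2_eq_square)
  also have "\<dots> \<le> 2 * a / b * s * eb"
    using ab assms by (intro mult_left_mono) auto
  finally show ?thesis
    unfolding ab(4) a_def[symmetric] b_def[symmetric] unfolding ab(3) by (simp add: mult_ac)
qed

lemma weighted_radius_ratio:
  fixes \<beta>0 \<rho>0 q eb D0 :: real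
  assumes "\<beta>0 > 0" "\<rho>0 > 0" "q \<noteq> 0"
  shows "2 * eb * p / (\<rho>0 * q) + D0 / sqrt (\<beta>0 * \<rho>0)
           = (2 * eb * sqrt \<beta>0 * p / (sqrt \<rho>0 * q) + D0) / sqrt (\<beta>0 * \<rho>0)"
proof -
  define a b where "a = sqrt \<beta>0" and "b = sqrt \<rho>0"
  have ab: "a > 0" "b > 0" "\<rho>0 = b\<^sup>2" "sqrt (\<beta>0 * \<rho>0) = a * b"
    using assms by (auto simp: a_def b_def real_sqrt_mult)
  have "2 * eb * p / (b\<^sup>2 * q) + D0 / (a * b) = (2 * eb * a * p / (b * q) + D0) / (a * b)"
    using ab assms(3) by (simp add: field_simps power2_eq_square)
  then show ?thesis
    unfolding ab(4) a_def[symmetric] b_def[symmetric] unfolding ab(3) .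
qed

lemma partial_geometric_sum_le:
  fixes \<sigma> \<gamma> :: real
  assumes "\<sigma> > 1" "\<gamma> \<ge> 0" "k \<le> K"
  shows "(\<Sum>j<k. \<gamma> * \<sigma> ^ j) \<le> \<gamma> * (\<sigma> ^ K - 1) / (\<sigma> - 1)"
proof -
  have "(\<Sum>j<k. \<gamma> * \<sigma> ^ j) \<le> (\<Sum>j<K. \<gamma> * \<sigma> ^ j)"
    using assms by (intro sum_mono2) auto
  also have "\<dots> = \<gamma> * (\<sigma> ^ K - 1) / (\<sigma> - 1)"
    using assms(1) by (simp add: geometric_sum flip: sum_distrib_left)
  finally show ?thesis .
qed

text \<open>Only convexity of \<open>f\<close> and \<open>r\<close>, the KKT conditions and \<open>\<epsilon>\<^sub>k \<le> epsbar\<close> enter the bounds;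
  smoothness of \<open>f\<close>, closedness of \<open>r\<close>, the second branch of the minimum in \<open>\<epsilon>\<^sub>k\<close> and
  \<open>K \<ge> 1\<close> are not needed.\<close>

theorem lemma5p6:
  fixes f :: "real ^ 'n \<Rightarrow> real" and gradf :: "real ^ 'n \<Rightarrow> real ^ 'n"
    and r :: "real ^ 'n \<Rightarrow> ereal"
    and Lf \<mu> :: real
    and Ae :: "real ^ 'n ^ 'm" and bE :: "real ^ 'm"
    and Ai :: "real ^ 'n ^ 'p" and bI :: "real ^ 'p"
    and xs :: "real ^ 'n" and lEs :: "real ^ 'm" and lIs :: "real ^ 'p"
    and x :: "nat \<Rightarrow> real ^ 'n" and lE :: "nat \<Rightarrow> real ^ 'm" and lI :: "nat \<Rightarrow> real ^ 'p"
    and \<epsilon> \<beta>0 \<rho>0 \<sigma> :: real and K :: nat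
    and G :: "real ^ 'n \<Rightarrow> ereal"
    and \<beta> \<rho> epsk :: "nat \<Rightarrow> real" and epsbar D0 Bx Bl :: real
  assumes f_diff: "\<And>y. (f has_derivative (\<lambda>h. gradf y \<bullet> h)) (at y)"
    and f_lip: "\<And>y z. norm (gradf y - gradf z) \<le> Lf * norm (y - z)"
    and mu_nonneg: "\<mu> \<ge> 0"
    and f_strong: "convex_on UNIV (\<lambda>y. f y - \<mu> / 2 * (norm y)\<^sup>2)"
    and r_proper: "proper_fn r" and r_closed: "closed_fn r" and r_convex: "convex_fn r"
    and G_def: "G = (\<lambda>y. ereal (f y) + r y)"
    and kkt_sub: "- (transpose Ae *v lEs + transpose Ai *v lIs) \<in> subdiff G xs"
    and kkt_eq: "Ae *v xs = bE"
    and kkt_ineq: "\<And>i. (Ai *v xs) $ i \<le> bI $ i"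
    and kkt_mult: "\<And>i. lIs $ i \<ge> 0"
    and kkt_compl: "lIs \<bullet> (Ai *v xs - bI) = 0"
    and eps: "0 < \<epsilon>" "\<epsilon> < 1"
    and pos: "\<beta>0 > 0" "\<rho>0 > 0" "\<sigma> > 1"
    and beta_def: "\<beta> = (\<lambda>k. \<beta>0 * \<sigma> ^ k)"
    and rho_def: "\<rho> = (\<lambda>k. \<rho>0 / \<sigma> ^ k)"
    and epsbar_def: "epsbar = \<epsilon> * (\<sigma> - 1) / (8 * (\<sigma> + 1)) * min 1 (sqrt (\<beta>0 * \<rho>0))"
    and epsk_def: "epsk = (\<lambda>k. min epsbar (sqrt (\<rho>0 / (20 * \<sigma>)) / \<sigma> ^ k))"
    and x0_dom: "x 0 \<in> effdom G"
    and x_step: "\<And>k. dist0 (subdiff (\<lambda>y. auglag G Ae bE Ai bI (\<beta> k) y (lE k) (lI k)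
                         + ereal (\<rho> k / 2 * (norm (y - x k))\<^sup>2)) (x (Suc k))) \<le> ereal (epsk k)"
    and lE_step: "\<And>k. lE (Suc k) = lE k + \<beta> k *\<^sub>R (Ae *v x (Suc k) - bE)"
    and lI_step: "\<And>k. lI (Suc k) = pospart (lI k + \<beta> k *\<^sub>R (Ai *v x (Suc k) - bI))"
    and D0_def: "D0 = sqrt (\<beta>0 * \<rho>0 * (norm (x 0 - xs))\<^sup>2
                     + (norm (lE 0 - lEs))\<^sup>2 + (norm (lI 0 - lIs))\<^sup>2)"
    and K_ge: "K \<ge> 1"
    and Bx_def: "Bx = 2 * epsbar * (\<sigma> ^ K - 1) / (\<rho>0 * (\<sigma> - 1)) + D0 / sqrt (\<beta>0 * \<rho>0)"
    and Bl_def: "Bl = 2 * epsbar * sqrt \<beta>0 * (\<sigma> ^ K - 1) / (sqrt \<rho>0 * (\<sigma> - 1)) + D0"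
  shows "(\<forall>k\<le>K. norm (x k - xs) \<le> Bx
            \<and> sqrt ((norm (lE k - lEs))\<^sup>2 + (norm (lI k - lIs))\<^sup>2) \<le> Bl)
       \<and> (\<forall>k<K. \<forall>z. (\<forall>y. auglag G Ae bE Ai bI (\<beta> k) z (lE k) (lI k)
                           + ereal (\<rho> k / 2 * (norm (z - x k))\<^sup>2)
                        \<le> auglag G Ae bE Ai bI (\<beta> k) y (lE k) (lI k)
                           + ereal (\<rho> k / 2 * (norm (y - x k))\<^sup>2))
                 \<longrightarrow> norm (z - xs) \<le> Bx)"
proof -
  have r_not_minf: "\<And>y. r y \<noteq> -\<infinity>"
    using r_proper by (simp add: proper_fn_def)
  interpret ipalm_kkt f r G Ae bE Ai bI xs lEs lIs
    by (rule ipalm_kkt.intro[OF convex_on_of_strongly_convex[OF mu_nonneg f_strong] r_convex r_not_minf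
          G_def kkt_sub kkt_eq kkt_ineq kkt_mult kkt_compl])
  define c where "c = \<beta>0 * \<rho>0"
  define \<gamma> where "\<gamma> = 2 * epsbar * sqrt \<beta>0 / sqrt \<rho>0"
  have c: "c > 0" and \<gamma>: "\<gamma> \<ge> 0"
    using eps pos by (auto simp: c_def \<gamma>_def epsbar_def)
  have \<beta>\<rho>: "\<beta> k > 0" "\<rho> k > 0" "\<beta> k * \<rho> k = c" for k
    using pos by (auto simp: beta_def rho_def c_def)
  have "2 * \<beta> k / sqrt c * epsk k \<le> \<gamma> * \<sigma> ^ k" for k
    unfolding beta_def c_def \<gamma>_def using pos by (intro weighted_increment_le) (auto simp: epsk_def)
  note iterates = pd_dist_iterates_le[where \<delta> = "\<lambda>j. \<gamma> * \<sigma> ^ j", OF \<beta>\<rho> x_step lE_step lI_step this]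
  have "pd_dist c (x 0) (lE 0) (lI 0) = D0" and Bl: "D0 + \<gamma> * (\<sigma> ^ K - 1) / (\<sigma> - 1) = Bl"
    by (simp_all add: pd_dist_def D0_def c_def Bl_def \<gamma>_def)
  then have dist_le: "pd_dist c (x k) (lE k) (lI k) \<le> Bl" if "k \<le> K" for k
    using iterates[of k] partial_geometric_sum_le[OF pos(3) \<gamma> that] by linarith
  have Bx: "Bx = Bl / sqrt c"
    unfolding Bx_def Bl_def c_def using pos by (intro weighted_radius_ratio) auto
  show ?thesis
  proof (intro conjI allI impI)
    fix k assume k: "k \<le> K"
    show "norm (x k - xs) \<le> Bx"
      unfolding Bx by (rule norm_le_of_pd_dist_le[OF c dist_le[OF k]])
    show "sqrt ((norm (lE k - lEs))\<^sup>2 + (norm (lI k - lIs))\<^sup>2) \<le> Bl"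
      using c by (intro order_trans[OF multiplier_dist_le_pd_dist dist_le[OF k]]) simp
  next
    fix k z assume k: "k < K" and min: "\<forall>y. prox_auglag (\<beta> k) (\<rho> k) (x k) (lE k) (lI k) z
                                        \<le> prox_auglag (\<beta> k) (\<rho> k) (x k) (lE k) (lI k) y"
    note exact_step = pd_dist_exact_prox_step_le[OF \<beta>\<rho>(1,2) x0_dom min, unfolded \<beta>\<rho>(3)]
    show "norm (z - xs) \<le> Bx"
      unfolding Bx using k by (intro norm_le_of_pd_dist_le[OF c order_trans[OF exact_step dist_le]]) simp
  qed
qed

end
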